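(* In the parallel-links routing game with homogeneous costs described in the context and $N=2$ users, for each user $k\in\{1,2\}$ there exists a feasible routing profile $\bar{\mathbf f}$ whose link totals equal the system-optimal link flows $f^*_l$ and such that $J^k(\bar{\mathbf f})\ge\hat J^k$.
   Context: Parallel-links routing game: users $\mathcal N=\{1,\dots,N\}$ share parallel links $\mathcal L=\{1,\dots,L\}$ from a common source to a common destination; link $l$ has capacity $c_l$. User $i$ has demand $r^i>0$, $R=\sum_ir^i<\sum_lc_l$. A routing strategy of user $i$ is $\mathbf f^i=(f^i_l)_l$ with $f^i_l\ge0$, $\sum_lf^i_l=r^i$; $f_l=\sum_if^i_l$. Homogeneous costs: $J^i(\mathbf f)=\sum_lf^i_lT_l(f_l)$, each $T_l:[0,\infty)\to[0,\infty)$ strictly increasing, convex, continuously differentiable, with $T_l(f_l)=T(c_l-f_l)$ for $f_l<c_l$ and $T_l(f_l)=\infty$ for $f_l\ge c_l$, for a single link-independent function $T$ with $T(c_l-f_l)$ strictly increasing in $f_l$. NEP: the unique feasible $\hat{\mathbf f}$ in which each user's strategy minimizes its cost given the others'; $\hat J^i=J^i(\hat{\mathbf f})$. $(f^*_l)$ are the link totals minimizing $\sum_lf_lT_l(f_l)$ over feasible profiles. *)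

theory Defs
  imports "HOL-Analysis.Analysis"
begin

definition feasible_strategy :: "'l set \<Rightarrow> real \<Rightarrow> ('l \<Rightarrow> real) \<Rightarrow> bool" where
  "feasible_strategy Ls ri h \<longleftrightarrow> (\<forall>l\<in>Ls. 0 \<le> h l) \<and> (\<Sum>l\<in>Ls. h l) = ri"

definition feasible_profile :: "nat set \<Rightarrow> 'l set \<Rightarrow> (nat \<Rightarrow> real) \<Rightarrow> (nat \<Rightarrow> 'l \<Rightarrow> real) \<Rightarrow> bool" where
  "feasible_profile U Ls r f \<longleftrightarrow> (\<forall>i\<in>U. feasible_strategy Ls (r i) (f i))"

definition link_flow :: "nat set \<Rightarrow> (nat \<Rightarrow> 'l \<Rightarrow> real) \<Rightarrow> 'l \<Rightarrow> real" where
  "link_flow U f l = (\<Sum>i\<in>U. f i l)"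

definition link_cost :: "(real \<Rightarrow> real) \<Rightarrow> ('l \<Rightarrow> real) \<Rightarrow> 'l \<Rightarrow> real \<Rightarrow> ereal" where
  "link_cost T c l x = (if x < c l then ereal (T (c l - x)) else \<infinity>)"

definition user_cost :: "nat set \<Rightarrow> 'l set \<Rightarrow> (real \<Rightarrow> real) \<Rightarrow> ('l \<Rightarrow> real) \<Rightarrow> nat \<Rightarrow> (nat \<Rightarrow> 'l \<Rightarrow> real) \<Rightarrow> ereal" where
  "user_cost U Ls T c i f = (\<Sum>l\<in>Ls. ereal (f i l) * link_cost T c l (link_flow U f l))"

definition total_cost :: "nat set \<Rightarrow> 'l set \<Rightarrow> (real \<Rightarrow> real) \<Rightarrow> ('l \<Rightarrow> real) \<Rightarrow> (nat \<Rightarrow> 'l \<Rightarrow> real) \<Rightarrow> ereal" where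
  "total_cost U Ls T c f = (\<Sum>l\<in>Ls. ereal (link_flow U f l) * link_cost T c l (link_flow U f l))"

definition is_NEP :: "nat set \<Rightarrow> 'l set \<Rightarrow> (nat \<Rightarrow> real) \<Rightarrow> (real \<Rightarrow> real) \<Rightarrow> ('l \<Rightarrow> real) \<Rightarrow> (nat \<Rightarrow> 'l \<Rightarrow> real) \<Rightarrow> bool" where
  "is_NEP U Ls r T c f \<longleftrightarrow> feasible_profile U Ls r f \<and>
     (\<forall>i\<in>U. \<forall>h. feasible_strategy Ls (r i) h \<longrightarrow> user_cost U Ls T c i f \<le> user_cost U Ls T c i (f(i := h)))"

definition is_system_opt :: "nat set \<Rightarrow> 'l set \<Rightarrow> (nat \<Rightarrow> real) \<Rightarrow> (real \<Rightarrow> real) \<Rightarrow> ('l \<Rightarrow> real) \<Rightarrow> (nat \<Rightarrow> 'l \<Rightarrow> real) \<Rightarrow> bool" where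
  "is_system_opt U Ls r T c f \<longleftrightarrow> feasible_profile U Ls r f \<and>
     (\<forall>g. feasible_profile U Ls r g \<longrightarrow> total_cost U Ls T c f \<le> total_cost U Ls T c g)"

definition homogeneous_cost_ok :: "(real \<Rightarrow> real) \<Rightarrow> real \<Rightarrow> bool" where
  "homogeneous_cost_ok T cl \<longleftrightarrow>
     (\<forall>x\<in>{0..<cl}. 0 \<le> T (cl - x)) \<and>
     strict_mono_on {0..<cl} (\<lambda>x. T (cl - x)) \<and>
     convex_on {0..<cl} (\<lambda>x. T (cl - x)) \<and>
     (\<exists>D. (\<forall>x\<in>{0..<cl}. ((\<lambda>y. T (cl - y)) has_real_derivative D x) (at x within {0..<cl}))
          \<and> continuous_on {0..<cl} D)"

end

theory Submission
  imports Defs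
begin

text \<open>Let \<open>j\<close> be the other user and \<open>F\<close> the optimal link totals. User \<open>k\<close> can spread
  its demand over the positive part of \<open>F - \<hat>f\<^sup>j\<close>, scaled to total \<open>r\<^sup>k\<close> (possible since
  that positive part sums to at least \<open>\<Sum>F - r\<^sup>j = r\<^sup>k\<close>). This deviation \<open>h\<close> never loads a
  link used by \<open>k\<close> beyond \<open>F\<close>, so by monotonicity of the link costs it is no more expensive
  for \<open>k\<close> than the split \<open>(h, F - h)\<close> of the optimal totals; and by the Nash property it is
  no cheaper than \<open>\<hat>J\<^sup>k\<close>.\<close>

lemma link_cost_mono:
  assumes "homogeneous_cost_ok T (c l)" and "0 \<le> x" and "x \<le> y"
  shows "link_cost T c l x \<le> link_cost T c l y"
proof (cases "y < c l")
  case True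
  have "mono_on {0..<c l} (\<lambda>x. T (c l - x))"
    using assms(1) strict_mono_on_imp_mono_on unfolding homogeneous_cost_ok_def by blast
  then have "T (c l - x) \<le> T (c l - y)"
    using True assms(2,3) by (auto intro: mono_onD)
  then show ?thesis
    using True assms(3) unfolding link_cost_def by simp
qed (simp add: link_cost_def)

lemma link_flow_pair: "k \<noteq> j \<Longrightarrow> link_flow {k, j} f l = f k l + f j l"
  unfolding link_flow_def by simp

lemma user_cost_mono:
  assumes ok: "\<forall>l\<in>Ls. homogeneous_cost_ok T (c l)"
    and same: "\<forall>l\<in>Ls. f i l = f' i l" and nonneg: "\<forall>l\<in>Ls. 0 \<le> f i l"
    and below: "\<forall>l\<in>Ls. 0 < f i l \<longrightarrow> 0 \<le> link_flow U f l \<and> link_flow U f l \<le> link_flow U f' l"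
  shows "user_cost U Ls T c i f \<le> user_cost U Ls T c i f'"
  unfolding user_cost_def
proof (rule sum_mono)
  fix l assume l: "l \<in> Ls"
  show "ereal (f i l) * link_cost T c l (link_flow U f l)
        \<le> ereal (f' i l) * link_cost T c l (link_flow U f' l)"
  proof (cases "f i l = 0")
    case False
    then have "0 < f i l" using l nonneg by (simp add: order_less_le)
    then have "link_cost T c l (link_flow U f l) \<le> link_cost T c l (link_flow U f' l)"
      using l ok below by (simp add: link_cost_mono)
    then show ?thesis
      using l same nonneg by (simp add: ereal_mult_left_mono)
  qed (use l same in \<open>simp add: zero_ereal_def[symmetric]\<close>)
qed

lemma exists_nonneg_sum_within_gap:
  fixes F g :: "'a \<Rightarrow> real"
  assumes "finite A" and "0 < a" and "a \<le> (\<Sum>l\<in>A. F l - g l)"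
  obtains h where "\<forall>l. 0 \<le> h l" and "(\<Sum>l\<in>A. h l) = a"
    and "\<forall>l. 0 < h l \<longrightarrow> h l + g l \<le> F l"
proof
  define d where "d l = max (F l - g l) 0" for l
  define S where "S = (\<Sum>l\<in>A. d l)"
  have "(\<Sum>l\<in>A. F l - g l) \<le> S"
    unfolding S_def d_def by (rule sum_mono) simp
  then have "a \<le> S" and "0 < S" using assms(2,3) by linarith+
  then have \<theta>: "0 < a / S" "a / S \<le> 1" using assms(2) by auto
  show "\<forall>l. 0 \<le> a / S * d l" using \<theta>(1) by (simp add: d_def del: times_divide_eq_left)
  show "(\<Sum>l\<in>A. a / S * d l) = a"
    using \<open>0 < S\<close> by (simp add: S_def flip: sum_distrib_left sum_divide_distrib)
  show "\<forall>l. 0 < a / S * d l \<longrightarrow> a / S * d l + g l \<le> F l"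
  proof (intro allI impI)
    fix l assume "0 < a / S * d l"
    then have "d l = F l - g l" using \<theta> by (auto simp: d_def zero_less_mult_iff)
    moreover have "a / S * d l \<le> d l"
      using \<theta> mult_left_le_one_le[of "d l" "a / S"] by (simp add: d_def del: times_divide_eq_left)
    ultimately show "a / S * d l + g l \<le> F l" by linarith
  qed
qed

lemma NEP_cost_le_some_split_of_link_flows:
  fixes Ls :: "'l set" and fhat fopt :: "nat \<Rightarrow> 'l \<Rightarrow> real"
  assumes fin: "finite Ls" and kj: "k \<noteq> j"
    and ok: "\<forall>l\<in>Ls. homogeneous_cost_ok T (c l)" and rk: "0 < r k"
    and nep: "is_NEP {k, j} Ls r T c fhat"
    and fo: "feasible_profile {k, j} Ls r fopt"
  shows "\<exists>fbar. feasible_profile {k, j} Ls r fbar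
           \<and> (\<forall>l\<in>Ls. link_flow {k, j} fbar l = link_flow {k, j} fopt l)
           \<and> user_cost {k, j} Ls T c k fbar \<ge> user_cost {k, j} Ls T c k fhat"
proof -
  define F where "F = link_flow {k, j} fopt"
  have fhj: "feasible_strategy Ls (r j) (fhat j)"
    using nep unfolding is_NEP_def feasible_profile_def by simp
  have F_nonneg: "\<forall>l\<in>Ls. 0 \<le> F l" and F_sum: "(\<Sum>l\<in>Ls. F l) = r k + r j"
    using fo kj unfolding F_def feasible_profile_def feasible_strategy_def
    by (auto simp: link_flow_pair sum.distrib)
  then have "r k \<le> (\<Sum>l\<in>Ls. F l - fhat j l)"
    using fhj by (simp add: feasible_strategy_def sum_subtractf)
  then obtain h where h_nonneg: "\<forall>l. 0 \<le> h l" and h_sum: "(\<Sum>l\<in>Ls. h l) = r k"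
    and h_gap: "\<forall>l. 0 < h l \<longrightarrow> h l + fhat j l \<le> F l"
    using exists_nonneg_sum_within_gap[OF fin rk] by blast
  have h_le_F: "\<forall>l\<in>Ls. h l \<le> F l"
    using h_nonneg h_gap fhj F_nonneg unfolding feasible_strategy_def
    by (smt (verit, best))
  define fbar where "fbar = fopt(k := h, j := (\<lambda>l. F l - h l))"
  have fbar_flows: "\<forall>l\<in>Ls. link_flow {k, j} fbar l = F l"
    using kj by (simp add: fbar_def link_flow_pair)
  have "feasible_profile {k, j} Ls r fbar"
    using kj h_nonneg h_sum h_le_F F_sum
    by (auto simp: fbar_def feasible_profile_def feasible_strategy_def sum_subtractf)
  moreover have "user_cost {k, j} Ls T c k fhat \<le> user_cost {k, j} Ls T c k (fhat(k := h))"
    using nep h_nonneg h_sum unfolding is_NEP_def feasible_strategy_def by blast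
  moreover have "\<dots> \<le> user_cost {k, j} Ls T c k fbar"
    using ok h_nonneg h_gap fbar_flows fhj kj
    by (intro user_cost_mono) (auto simp: fbar_def link_flow_pair feasible_strategy_def)
  ultimately show ?thesis
    using fbar_flows unfolding F_def by (blast intro: order_trans)
qed

theorem lemma3p3:
  fixes Ls :: "'l set" and c :: "'l \<Rightarrow> real" and r :: "nat \<Rightarrow> real"
    and T :: "real \<Rightarrow> real" and fhat fopt :: "nat \<Rightarrow> 'l \<Rightarrow> real" and k :: nat
  assumes "finite Ls"
    and "\<forall>l\<in>Ls. 0 < c l"
    and "\<forall>l\<in>Ls. homogeneous_cost_ok T (c l)"
    and "r 1 > 0" and "r 2 > 0"
    and "r 1 + r 2 < (\<Sum>l\<in>Ls. c l)"
    and "is_NEP {1, 2} Ls r T c fhat"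
    and "is_system_opt {1, 2} Ls r T c fopt"
    and "k \<in> {1, 2}"
  shows "\<exists>fbar. feasible_profile {1, 2} Ls r fbar
           \<and> (\<forall>l\<in>Ls. link_flow {1, 2} fbar l = link_flow {1, 2} fopt l)
           \<and> user_cost {1, 2} Ls T c k fbar \<ge> user_cost {1, 2} Ls T c k fhat"
proof -
  define j where "j = (3::nat) - k"
  have users: "{1, 2} = {k, j}" and "k \<noteq> j" and "0 < r k"
    using assms(4,5,9) unfolding j_def by auto
  moreover have "feasible_profile {k, j} Ls r fopt"
    using assms(8) unfolding is_system_opt_def users by blast
  ultimately show ?thesis
    using NEP_cost_le_some_split_of_link_flows[OF assms(1) _ assms(3)] assms(7) by metis
qed

end
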